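(* Let $\overline m<\overline m'$ be maximum memory lengths. For GP-ASSMs (as defined in the context) with states $\bm x_t^m$ (memory $\overline m$) and $\bm x_t^{m'}$ (memory $\overline m'$), built from the same training data, kernel and mean function, with the same input sequence and the same initial state $\bm x_0^m=\bm x_0^{m'}\in\mathbb{R}^{n_x}$, the implication $$\sup_{t\in\mathbb{N}}\mathbb E\|\bm x_t^m\|^p<\infty\ \Longrightarrow\ \sup_{t\in\mathbb{N}}\mathbb E\|\bm x_t^{m'}\|^p<\infty$$ does not hold in general, for any $p\in\mathbb{N}$; that is, boundedness of the $p$-th moments of the GP-ASSM with memory $\overline m$ does not imply boundedness of the $p$-th moments of the GP-ASSM with the longer memory $\overline m'$.
   Context: Training set $\mathcal D=\{X,Y\}$ with input matrix $X\in\mathbb{R}^{n_\xi\times n_{\mathcal D}}$ and output matrix $Y\in\mathbb{R}^{n_{\mathcal D}\times n_x}$, outputs corrupted by Gaussian noise $\mathcal N(0,\sigma_n^2 I)$. A kernel $k:\mathbb{R}^{n_\xi}\times\mathbb{R}^{n_\xi}\to\mathbb{R}$ (symmetric, positive semidefinite, not necessarily bounded) and a continuous mean function $m:\mathbb{R}^{n_\xi}\to\mathbb{R}$ are used for every output dimension. For matrices $A=[a_1,\dots,a_p]$, $B=[b_1,\dots,b_q]$ with columns in $\mathbb{R}^{n_\xi}$, $K(A,B)$ is the $p\times q$ matrix with entries $k(a_i,b_j)$, $\bm k(z,A)=(k(z,a_1),\dots,k(z,a_p))^\top$, $\bm m(A)=(m(a_1),\dots,m(a_p))^\top$, and $K:=K(X,X)$.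 GP-ASSM with maximum memory length $\overline m\in\mathbb{N}\cup\{\infty\}$: states $\bm x_t\in\mathbb{R}^{n_x}$, inputs $\bm u_t\in\mathbb{R}^{n_u}$, $\bm\xi_t=[\bm x_t;\bm u_t]\in\mathbb{R}^{n_\xi}$, $n_\xi=n_x+n_u$. For $t\in\mathbb{N}$ let $\underline m=\min(t,\overline m)$, memory $\Xi^m_t=[\bm\xi_{t-1},\dots,\bm\xi_{t-\underline m}]$ (empty if $\underline m=0$), $X^m_t=[X,\bm\xi_{t-\underline m},\dots,\bm\xi_{t-1}]$, $Y^m_t=[Y^\top,\bm x_{t-\underline m+1},\dots,\bm x_t]^\top$, and with $\Xi=[\bm\xi_{t-\underline m},\dots,\bm\xi_{t-1}]$, $K^m_t=\begin{bmatrix}K+\sigma_n^2I & K(X,\Xi)\\ K(\Xi,X)&K(\Xi,\Xi)\end{bmatrix}$ (and $K^m_t=K+\sigma_n^2 I$ if $\underline m=0$). Define $\bm f_t(\bm\xi_t,\Xi^m_t)\in\mathbb{R}^{n_x}$ with $i$-th component $m(\bm\xi_t)+\bm k(\bm\xi_t,X^m_t)^\top(K^m_t)^{-1}\big((Y^m_t)_{:,i}-\bm m(X^m_t)\big)$ and the diagonal matrix $F_t(\bm\xi_t,\Xi^m_t)$ with all diagonal entries $k(\bm\xi_t,\bm\xi_t)-\bm k(\bm\xi_t,X^m_t)^\top(K^m_t)^{-1}\bm k(\bm\xi_t,X^m_t)$ (inverses are Moore–Penrose pseudoinverses if singular). The GP-ASSM is the stochastic process obtained by sequentially sampling $\bm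 x^m_{t+1}\mid\bm\xi_{0:t}\sim\mathcal N(\bm f_t(\bm\xi_t,\Xi^m_t),F_t(\bm\xi_t,\Xi^m_t))$; the process with $\overline m'$ is defined in the same way along its own trajectory $\bm\xi'_t=[\bm x^{m'}_t;\bm u_t]$. *)

theory Defs
  imports "HOL-Probability.Probability" "Jordan_Normal_Form.Matrix"
begin

definition pinv :: "real mat \<Rightarrow> real mat" where
  "pinv A = (THE B. B \<in> carrier_mat (dim_col A) (dim_row A) \<and>
       A * B * A = A \<and> B * A * B = B \<and>
       transpose_mat (A * B) = A * B \<and> transpose_mat (B * A) = B * A)"

definition vnorm :: "real vec \<Rightarrow> real" where
  "vnorm v = sqrt (\<Sum>i<dim_vec v. (v $ i)\<^sup>2)"

definition gram :: "(real vec \<Rightarrow> real vec \<Rightarrow> real) \<Rightarrow> real vec list \<Rightarrow> real vec list \<Rightarrow> real mat" where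
  "gram k A B = mat (length A) (length B) (\<lambda>(i,j). k (A ! i) (B ! j))"

definition kvec :: "(real vec \<Rightarrow> real vec \<Rightarrow> real) \<Rightarrow> real vec \<Rightarrow> real vec list \<Rightarrow> real vec" where
  "kvec k z A = vec (length A) (\<lambda>i. k z (A ! i))"

definition mvec :: "(real vec \<Rightarrow> real) \<Rightarrow> real vec list \<Rightarrow> real vec" where
  "mvec mf A = vec (length A) (\<lambda>i. mf (A ! i))"

definition sym_kernel_on :: "nat \<Rightarrow> (real vec \<Rightarrow> real vec \<Rightarrow> real) \<Rightarrow> bool" where
  "sym_kernel_on n k \<longleftrightarrow>
     (\<forall>a b. a \<in> carrier_vec n \<longrightarrow> b \<in> carrier_vec n \<longrightarrow> k a b = k b a)"

definition psd_kernel_on :: "nat \<Rightarrow> (real vec \<Rightarrow> real vec \<Rightarrow> real) \<Rightarrow> bool" where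
  "psd_kernel_on n k \<longleftrightarrow>
     (\<forall>zs c. set zs \<subseteq> carrier_vec n \<longrightarrow>
        (\<Sum>i<length zs. \<Sum>j<length zs. c i * c j * k (zs ! i) (zs ! j)) \<ge> 0)"

definition continuous_mean_on :: "nat \<Rightarrow> (real vec \<Rightarrow> real) \<Rightarrow> bool" where
  "continuous_mean_on n mf \<longleftrightarrow>
     (\<forall>a \<in> carrier_vec n. \<forall>e>0. \<exists>d>0. \<forall>b \<in> carrier_vec n.
        vnorm (b - a) < d \<longrightarrow> \<bar>mf b - mf a\<bar> < e)"

text \<open>States x \<in> R^nx are represented as functions nat \<Rightarrow> real (components i < nx),
  inputs likewise with components i < nu; a trajectory prefix x_0..x_t is a function
  nat \<Rightarrow> (nat \<Rightarrow> real) (indices \<le> t).  Parameters: nx nu, training inputs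
  X (n_xi \<times> n_D), outputs Y (n_D \<times> nx), noise std sn, kernel k, mean mf,
  memory bound mb, input sequence u.\<close>

definition xi_of :: "nat \<Rightarrow> nat \<Rightarrow> (nat \<Rightarrow> real) \<Rightarrow> (nat \<Rightarrow> real) \<Rightarrow> real vec" where
  "xi_of nx nu x uu = vec (nx + nu) (\<lambda>i. if i < nx then x i else uu (i - nx))"

definition mem_len :: "enat \<Rightarrow> nat \<Rightarrow> nat" where
  "mem_len mb t = (if enat t \<le> mb then t else the_enat mb)"

definition Kmem :: "nat \<Rightarrow> nat \<Rightarrow> real mat \<Rightarrow> real \<Rightarrow> (real vec \<Rightarrow> real vec \<Rightarrow> real) \<Rightarrow> enat
     \<Rightarrow> (nat \<Rightarrow> nat \<Rightarrow> real) \<Rightarrow> nat \<Rightarrow> (nat \<Rightarrow> nat \<Rightarrow> real) \<Rightarrow> real mat" where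
  "Kmem nx nu X sn k mb u t h =
     (let ml = mem_len mb t;
          Xi = map (\<lambda>j. xi_of nx nu (h j) (u j)) [t - ml..<t];
          XD = cols X
      in four_block_mat (gram k XD XD + sn\<^sup>2 \<cdot>\<^sub>m 1\<^sub>m (length XD)) (gram k XD Xi)
                        (gram k Xi XD) (gram k Xi Xi))"

definition Xmem :: "nat \<Rightarrow> nat \<Rightarrow> real mat \<Rightarrow> enat
     \<Rightarrow> (nat \<Rightarrow> nat \<Rightarrow> real) \<Rightarrow> nat \<Rightarrow> (nat \<Rightarrow> nat \<Rightarrow> real) \<Rightarrow> real vec list" where
  "Xmem nx nu X mb u t h =
     (let ml = mem_len mb t
      in cols X @ map (\<lambda>j. xi_of nx nu (h j) (u j)) [t - ml..<t])"

definition Ymem_col :: "real mat \<Rightarrow> enat \<Rightarrow> nat \<Rightarrow> (nat \<Rightarrow> nat \<Rightarrow> real) \<Rightarrow> nat \<Rightarrow> real vec" where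
  "Ymem_col Y mb t h i =
     (let ml = mem_len mb t; nD = dim_row Y
      in vec (nD + ml) (\<lambda>r. if r < nD then Y $$ (r, i) else h (t - ml + 1 + (r - nD)) i))"

text \<open>Posterior mean f_t (componentwise) and posterior variance (common diagonal entry of F_t).\<close>
definition fmean :: "nat \<Rightarrow> nat \<Rightarrow> real mat \<Rightarrow> real mat \<Rightarrow> real \<Rightarrow> (real vec \<Rightarrow> real vec \<Rightarrow> real)
     \<Rightarrow> (real vec \<Rightarrow> real) \<Rightarrow> enat \<Rightarrow> (nat \<Rightarrow> nat \<Rightarrow> real) \<Rightarrow> nat \<Rightarrow> (nat \<Rightarrow> nat \<Rightarrow> real) \<Rightarrow> nat \<Rightarrow> real" where
  "fmean nx nu X Y sn k mf mb u t h i =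
     (let z = xi_of nx nu (h t) (u t); XM = Xmem nx nu X mb u t h
      in mf z + kvec k z XM \<bullet> (pinv (Kmem nx nu X sn k mb u t h) *\<^sub>v (Ymem_col Y mb t h i - mvec mf XM)))"

definition fvar :: "nat \<Rightarrow> nat \<Rightarrow> real mat \<Rightarrow> real \<Rightarrow> (real vec \<Rightarrow> real vec \<Rightarrow> real)
     \<Rightarrow> enat \<Rightarrow> (nat \<Rightarrow> nat \<Rightarrow> real) \<Rightarrow> nat \<Rightarrow> (nat \<Rightarrow> nat \<Rightarrow> real) \<Rightarrow> real" where
  "fvar nx nu X sn k mb u t h =
     (let z = xi_of nx nu (h t) (u t); XM = Xmem nx nu X mb u t h
      in k z z - kvec k z XM \<bullet> (pinv (Kmem nx nu X sn k mb u t h) *\<^sub>v kvec k z XM))"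

definition normal1 :: "real \<Rightarrow> real \<Rightarrow> real measure" where
  "normal1 mu v = (if v \<le> 0 then return borel mu else density lborel (normal_density mu (sqrt v)))"

definition state_space :: "nat \<Rightarrow> (nat \<Rightarrow> real) measure" where
  "state_space nx = PiM {..<nx} (\<lambda>_. borel)"

definition hist_space :: "nat \<Rightarrow> nat \<Rightarrow> (nat \<Rightarrow> nat \<Rightarrow> real) measure" where
  "hist_space nx t = PiM {..t} (\<lambda>_. state_space nx)"

definition gauss_diag :: "nat \<Rightarrow> (nat \<Rightarrow> real) \<Rightarrow> real \<Rightarrow> (nat \<Rightarrow> real) measure" where
  "gauss_diag nx mu v = PiM {..<nx} (\<lambda>i. normal1 (mu i) v)"

definition gp_kernel :: "nat \<Rightarrow> nat \<Rightarrow> real mat \<Rightarrow> real mat \<Rightarrow> real \<Rightarrow> (real vec \<Rightarrow> real vec \<Rightarrow> real)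
     \<Rightarrow> (real vec \<Rightarrow> real) \<Rightarrow> enat \<Rightarrow> (nat \<Rightarrow> nat \<Rightarrow> real) \<Rightarrow> nat \<Rightarrow> (nat \<Rightarrow> nat \<Rightarrow> real) \<Rightarrow> (nat \<Rightarrow> real) measure" where
  "gp_kernel nx nu X Y sn k mf mb u t h =
     gauss_diag nx (fmean nx nu X Y sn k mf mb u t h) (fvar nx nu X sn k mb u t h)"

fun gp_hist :: "nat \<Rightarrow> nat \<Rightarrow> real mat \<Rightarrow> real mat \<Rightarrow> real \<Rightarrow> (real vec \<Rightarrow> real vec \<Rightarrow> real)
     \<Rightarrow> (real vec \<Rightarrow> real) \<Rightarrow> enat \<Rightarrow> (nat \<Rightarrow> nat \<Rightarrow> real) \<Rightarrow> (nat \<Rightarrow> real) \<Rightarrow> nat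
     \<Rightarrow> (nat \<Rightarrow> nat \<Rightarrow> real) measure" where
  "gp_hist nx nu X Y sn k mf mb u x0 0 =
     return (hist_space nx 0) (\<lambda>j\<in>{..0}. restrict x0 {..<nx})"
| "gp_hist nx nu X Y sn k mf mb u x0 (Suc t) =
     gp_hist nx nu X Y sn k mf mb u x0 t \<bind>
       (\<lambda>h. distr (gp_kernel nx nu X Y sn k mf mb u t h) (hist_space nx (Suc t)) (\<lambda>x. h(Suc t := x)))"

definition gp_moment :: "nat \<Rightarrow> nat \<Rightarrow> real mat \<Rightarrow> real mat \<Rightarrow> real \<Rightarrow> (real vec \<Rightarrow> real vec \<Rightarrow> real)
     \<Rightarrow> (real vec \<Rightarrow> real) \<Rightarrow> enat \<Rightarrow> (nat \<Rightarrow> nat \<Rightarrow> real) \<Rightarrow> (nat \<Rightarrow> real) \<Rightarrow> nat \<Rightarrow> nat \<Rightarrow> ennreal" where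
  "gp_moment nx nu X Y sn k mf mb u x0 p t =
     (\<integral>\<^sup>+ h. ennreal ((sqrt (\<Sum>i<nx. (h t i)\<^sup>2)) ^ p) \<partial>(gp_hist nx nu X Y sn k mf mb u x0 t))"

definition gp_wellposed :: "nat \<Rightarrow> nat \<Rightarrow> real mat \<Rightarrow> real mat \<Rightarrow> real \<Rightarrow> (real vec \<Rightarrow> real vec \<Rightarrow> real)
     \<Rightarrow> (real vec \<Rightarrow> real) \<Rightarrow> enat \<Rightarrow> (nat \<Rightarrow> nat \<Rightarrow> real) \<Rightarrow> bool" where
  "gp_wellposed nx nu X Y sn k mf mb u \<longleftrightarrow>
     (\<forall>t. gp_kernel nx nu X Y sn k mf mb u t \<in> hist_space nx t \<rightarrow>\<^sub>M prob_algebra (state_space nx))"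

end

theory Submission
  imports Defs
begin

(* The counterexample has scalar state, input u_t = t, no training data, the state itself as prior
   mean, and the rank-one kernel k(a, b) = lambda(a_u) lambda(b_u), where the pulse lambda(s) is
   1/(j+1) if s = jT is the j-th multiple of the period T = m + 1 and 0 otherwise.  If v collects
   the memorised pulses and y the memorised increments, the posterior mean is
   x_t + lambda_t (v.y)/(v.v) and the posterior variance is lambda_t^2 if v = 0 and 0 otherwise.

   A memory of length m never contains the previous pulse, so that process is a random walk with
   independent N(0, lambda_t^2) increments.  As the lambda_t^2 sum to less than pi^2/6, its
   exponential moments, and with them all moments, stay bounded.  A longer memory sees the
   previous pulse at every pulse time t >= T; there the noise vanishes and the memorised increments
   make the chain continue as x_t = H_t x_1, with H_t = sum_{s<t} lambda_s a harmonic number and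
   x_1 ~ N(0,1).  Hence E|x_t|^p = H_t^p E|N(0,1)|^p diverges. *)

section \<open>Pseudoinverse of a rank-one matrix\<close>

lemma moore_penrose_unique:
  fixes A B C :: "real mat"
  assumes A: "A \<in> carrier_mat n m" and B: "B \<in> carrier_mat m n" and C: "C \<in> carrier_mat m n"
    and B1: "A * B * A = A" and B2: "B * A * B = B"
    and B3: "transpose_mat (A * B) = A * B" and B4: "transpose_mat (B * A) = B * A"
    and C1: "A * C * A = A" and C2: "C * A * C = C"
    and C3: "transpose_mat (A * C) = A * C" and C4: "transpose_mat (C * A) = C * A"
  shows "B = C"
proof -
  have AB: "A * B \<in> carrier_mat n n" "A * C \<in> carrier_mat n n"
    and BA: "B * A \<in> carrier_mat m m" "C * A \<in> carrier_mat m m" using A B C by auto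
  have AB_eq_AC: "A * B = A * C"
  proof -
    have "A * B = (A * C * A) * B" using C1 by simp
    also have "\<dots> = (A * C) * (A * B)" using A B C by (metis assoc_mult_mat mult_carrier_mat)
    also have "\<dots> = transpose_mat ((A * B) * (A * C))"
      using AB B3 C3 by (simp add: transpose_mult[of _ n n _ n])
    also have "(A * B) * (A * C) = (A * B * A) * C"
      using A B C by (metis assoc_mult_mat mult_carrier_mat)
    finally show ?thesis using B1 C3 by simp
  qed
  have BA_eq_CA: "B * A = C * A"
  proof -
    have "B * A = B * (A * C * A)" using C1 by simp
    also have "\<dots> = (B * A) * (C * A)" using A B C by (metis assoc_mult_mat mult_carrier_mat)
    also have "\<dots> = transpose_mat ((C * A) * (B * A))"
      using BA B4 C4 by (simp add: transpose_mult[of _ m m _ m])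
    also have "(C * A) * (B * A) = C * (A * B * A)"
      using A B C by (metis assoc_mult_mat mult_carrier_mat)
    finally show ?thesis using B1 C4 by simp
  qed
  have "B = B * (A * B)" using A B B2 by (metis assoc_mult_mat)
  also have "\<dots> = (C * A) * C" using A B C AB_eq_AC BA_eq_CA by (metis assoc_mult_mat)
  finally show ?thesis using C2 by simp
qed

lemma pinv_eqI:
  assumes A: "A \<in> carrier_mat n m" and B: "B \<in> carrier_mat m n"
    and "A * B * A = A" and "B * A * B = B"
    and "transpose_mat (A * B) = A * B" and "transpose_mat (B * A) = B * A"
  shows "pinv A = B"
  unfolding pinv_def
proof (rule the_equality)
  fix C assume "C \<in> carrier_mat (dim_col A) (dim_row A) \<and> A * C * A = A \<and> C * A * C = C \<and>
      transpose_mat (A * C) = A * C \<and> transpose_mat (C * A) = C * A"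
  then show "C = B" using moore_penrose_unique[OF A B, of C] assms by auto
qed (use assms in auto)

definition outer_prod :: "real vec \<Rightarrow> real mat" where
  "outer_prod v = mat (dim_vec v) (dim_vec v) (\<lambda>(i, j). v $ i * v $ j)"

lemma dim_outer_prod [simp]:
  "dim_row (outer_prod v) = dim_vec v" "dim_col (outer_prod v) = dim_vec v"
  by (simp_all add: outer_prod_def)

lemma outer_prod_carrier [simp]: "outer_prod v \<in> carrier_mat (dim_vec v) (dim_vec v)"
  by (rule carrier_matI) simp_all

lemma transpose_smult_outer_prod: "transpose_mat (a \<cdot>\<^sub>m outer_prod v) = a \<cdot>\<^sub>m outer_prod v"
  by (rule eq_matI) (auto simp: outer_prod_def)

lemma outer_prod_eq_0:
  fixes v :: "real vec"
  assumes "v \<bullet> v = 0"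
  shows "outer_prod v = 0\<^sub>m (dim_vec v) (dim_vec v)"
proof -
  have "\<forall>i\<in>{0..<dim_vec v}. v $ i * v $ i = 0"
    using assms unfolding scalar_prod_def by (subst (asm) sum_nonneg_eq_0_iff) auto
  then show ?thesis by (intro eq_matI) (auto simp: outer_prod_def)
qed

lemma smult_outer_prod_mult:
  "(a \<cdot>\<^sub>m outer_prod v) * (b \<cdot>\<^sub>m outer_prod v) = (a * b * (v \<bullet> v)) \<cdot>\<^sub>m outer_prod v"
proof (rule eq_matI)
  fix i j assume "i < dim_row ((a * b * (v \<bullet> v)) \<cdot>\<^sub>m outer_prod v)"
    and "j < dim_col ((a * b * (v \<bullet> v)) \<cdot>\<^sub>m outer_prod v)"
  then have ij: "i < dim_vec v" "j < dim_vec v" by (auto simp: outer_prod_def)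
  have "((a \<cdot>\<^sub>m outer_prod v) * (b \<cdot>\<^sub>m outer_prod v)) $$ (i, j)
      = (\<Sum>k = 0..<dim_vec v. (a * (v $ i * v $ k)) * (b * (v $ k * v $ j)))"
    using ij by (simp add: outer_prod_def scalar_prod_def)
  also have "\<dots> = (\<Sum>k = 0..<dim_vec v. (a * b * (v $ i * v $ j)) * (v $ k * v $ k))"
    by (rule sum.cong) (auto simp: mult_ac)
  also have "\<dots> = ((a * b * (v \<bullet> v)) \<cdot>\<^sub>m outer_prod v) $$ (i, j)"
    using ij by (simp add: outer_prod_def scalar_prod_def sum_distrib_left mult_ac)
  finally show "((a \<cdot>\<^sub>m outer_prod v) * (b \<cdot>\<^sub>m outer_prod v)) $$ (i, j)
      = ((a * b * (v \<bullet> v)) \<cdot>\<^sub>m outer_prod v) $$ (i, j)" .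
qed (auto simp: outer_prod_def)

lemma pinv_outer_prod: "pinv (outer_prod v) = (1 / (v \<bullet> v)\<^sup>2) \<cdot>\<^sub>m outer_prod v"
proof (rule pinv_eqI[of _ "dim_vec v" "dim_vec v"])
  let ?A = "outer_prod v" and ?c = "1 / (v \<bullet> v)\<^sup>2"
  have one: "1 \<cdot>\<^sub>m ?A = ?A" by (rule eq_matI) auto
  have AcA: "?A * (?c \<cdot>\<^sub>m ?A) = (?c * (v \<bullet> v)) \<cdot>\<^sub>m ?A"
    "(?c \<cdot>\<^sub>m ?A) * ?A = (?c * (v \<bullet> v)) \<cdot>\<^sub>m ?A"
    using smult_outer_prod_mult[of 1 v ?c] smult_outer_prod_mult[of ?c v 1]
    by (simp_all only: one) simp_all
  have "?A * (?c \<cdot>\<^sub>m ?A) * ?A = (?c * (v \<bullet> v) * 1 * (v \<bullet> v)) \<cdot>\<^sub>m ?A"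
    using smult_outer_prod_mult[of "?c * (v \<bullet> v)" v 1] by (simp only: AcA one)
  also have "\<dots> = ?A"
    by (cases "v \<bullet> v = 0") (simp_all add: outer_prod_eq_0 power2_eq_square one)
  finally show "?A * (?c \<cdot>\<^sub>m ?A) * ?A = ?A" .
  have "(?c \<cdot>\<^sub>m ?A) * ?A * (?c \<cdot>\<^sub>m ?A) = (?c * (v \<bullet> v) * ?c * (v \<bullet> v)) \<cdot>\<^sub>m ?A"
    by (simp only: AcA smult_outer_prod_mult)
  also have "\<dots> = ?c \<cdot>\<^sub>m ?A"
    by (cases "v \<bullet> v = 0") (simp_all add: power2_eq_square)
  finally show "(?c \<cdot>\<^sub>m ?A) * ?A * (?c \<cdot>\<^sub>m ?A) = ?c \<cdot>\<^sub>m ?A" .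
  show "transpose_mat (?A * (?c \<cdot>\<^sub>m ?A)) = ?A * (?c \<cdot>\<^sub>m ?A)"
    "transpose_mat ((?c \<cdot>\<^sub>m ?A) * ?A) = (?c \<cdot>\<^sub>m ?A) * ?A"
    by (simp_all only: AcA transpose_smult_outer_prod)
qed simp_all

lemma smult_mat_mult_vec:
  "dim_vec v = dim_col A \<Longrightarrow> (a \<cdot>\<^sub>m (A :: real mat)) *\<^sub>v v = a \<cdot>\<^sub>v (A *\<^sub>v v)"
  by (rule eq_vecI) (auto simp: scalar_prod_def sum_distrib_left mult_ac)

lemma outer_prod_mult_vec: "dim_vec w = dim_vec v \<Longrightarrow> outer_prod v *\<^sub>v w = (v \<bullet> w) \<cdot>\<^sub>v v"
  by (rule eq_vecI) (auto simp: outer_prod_def scalar_prod_def sum_distrib_left algebra_simps)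

lemma scalar_prod_pinv_outer_prod:
  assumes "dim_vec r = dim_vec v"
  shows "(c \<cdot>\<^sub>v v) \<bullet> (pinv (outer_prod v) *\<^sub>v r) = c * (v \<bullet> r) / (v \<bullet> v)"
proof -
  have "pinv (outer_prod v) *\<^sub>v r = (1 / (v \<bullet> v)\<^sup>2 * (v \<bullet> r)) \<cdot>\<^sub>v v"
    using assms by (simp add: pinv_outer_prod smult_mat_mult_vec outer_prod_mult_vec smult_smult_assoc)
  then have "(c \<cdot>\<^sub>v v) \<bullet> (pinv (outer_prod v) *\<^sub>v r) = c * (1 / (v \<bullet> v)\<^sup>2 * (v \<bullet> r)) * (v \<bullet> v)"
    by simp
  also have "\<dots> = c * (v \<bullet> r) / (v \<bullet> v)"
    by (cases "v \<bullet> v = 0") (auto simp: power2_eq_square)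
  finally show ?thesis .
qed

section \<open>Univariate Gaussians\<close>

lemma prob_space_normal1: "prob_space (normal1 mu v)"
  by (simp add: normal1_def prob_space_return prob_space_normal_density)

lemma sets_normal1 [measurable_cong, simp]: "sets (normal1 mu v) = sets borel"
  by (simp add: normal1_def)

lemma measurable_normal1_pos:
  assumes v: "v > 0"
  shows "(\<lambda>mu. normal1 mu v) \<in> borel \<rightarrow>\<^sub>M prob_algebra borel"
proof (rule measurable_prob_algebra_generated[where \<Omega> = UNIV and G = "sets borel"])
  show "sets borel = sigma_sets UNIV (sets borel)"
    using sets.sigma_sets_eq[of borel] unfolding space_borel by (rule sym)
  show "Int_stable (sets borel)" by (auto simp: Int_stable_def)
  show "sets borel \<subseteq> Pow UNIV" by simp
  show "\<And>a. a \<in> space borel \<Longrightarrow> prob_space (normal1 a v)" by (rule prob_space_normal1)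
  show "\<And>a. a \<in> space borel \<Longrightarrow> sets (normal1 a v) = sets borel" by simp
  fix A :: "real set" assume A: "A \<in> sets borel"
  have eq: "\<And>a. emeasure (normal1 a v) A
      = (\<integral>\<^sup>+ x. ennreal (normal_density a (sqrt v) x) * indicator A x \<partial>lborel)"
    using v A by (simp add: normal1_def emeasure_density)
  have "(\<lambda>a. \<integral>\<^sup>+ x. ennreal (normal_density a (sqrt v) x) * indicator A x \<partial>lborel)
      \<in> borel_measurable borel"
    by (rule sigma_finite_measure.borel_measurable_nn_integral[OF lborel.sigma_finite_measure_axioms])
       (use A in \<open>simp add: normal_density_def[abs_def]\<close>)
  then show "(\<lambda>a. emeasure (normal1 a v) A) \<in> borel_measurable borel" by (simp only: eq)
qed

lemma measurable_normal1:
  assumes "g \<in> M \<rightarrow>\<^sub>M borel"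
  shows "(\<lambda>x. normal1 (g x) v) \<in> M \<rightarrow>\<^sub>M prob_algebra borel"
proof (cases "v \<le> 0")
  case True
  then show ?thesis
    using measurable_compose[OF assms measurable_return_prob_space] by (simp add: normal1_def)
next
  case False
  then show ?thesis using measurable_compose[OF assms measurable_normal1_pos[of v]] by simp
qed

lemma nn_integral_exp_normal1:
  "(\<integral>\<^sup>+ y. ennreal (exp (c * y)) \<partial>normal1 mu v) = ennreal (exp (c * mu + c\<^sup>2 * max v 0 / 2))"
proof (cases "v \<le> 0")
  case True
  then show ?thesis by (simp add: normal1_def nn_integral_return max_def)
next
  case False
  let ?s = "sqrt v"
  have s: "?s > 0" "?s\<^sup>2 = v" using False by simp_all
  have shift: "exp (c * y) * normal_density mu s y
      = exp (c * mu + c\<^sup>2 * s\<^sup>2 / 2) * normal_density (mu + c * s\<^sup>2) s y" if "s > 0" for s y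
  proof -
    have "c * y + (-(y - mu)\<^sup>2 / (2 * s\<^sup>2))
        = (c * mu + c\<^sup>2 * s\<^sup>2 / 2) + (-(y - (mu + c * s\<^sup>2))\<^sup>2 / (2 * s\<^sup>2))"
      using that by (simp add: field_simps power2_eq_square)
    then have "exp (c * y) * exp (-(y - mu)\<^sup>2 / (2 * s\<^sup>2)) =
        exp (c * mu + c\<^sup>2 * s\<^sup>2 / 2) * exp (-(y - (mu + c * s\<^sup>2))\<^sup>2 / (2 * s\<^sup>2))"
      by (simp add: exp_add[symmetric])
    then show ?thesis unfolding normal_density_def by (simp add: mult_ac)
  qed
  have "(\<integral>\<^sup>+ y. ennreal (exp (c * y)) \<partial>normal1 mu v)
      = (\<integral>\<^sup>+ y. ennreal (normal_density mu ?s y * exp (c * y)) \<partial>lborel)"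
    using False by (simp add: normal1_def nn_integral_density ennreal_mult)
  also have "\<dots> = (\<integral>\<^sup>+ y. ennreal (exp (c * mu + c\<^sup>2 * v / 2))
      * ennreal (normal_density (mu + c * v) ?s y) \<partial>lborel)"
    using shift[OF s(1)] s(2) by (simp add: mult.commute ennreal_mult)
  also have "\<dots> = ennreal (exp (c * mu + c\<^sup>2 * v / 2))"
  proof -
    have "(\<integral>\<^sup>+ y. ennreal (normal_density (mu + c * v) ?s y) \<partial>lborel) = 1"
      using s(1) by (subst nn_integral_eq_integral) (rule integrable_normal_density, simp_all)
    then show ?thesis by (simp add: nn_integral_cmult)
  qed
  finally show ?thesis using False by simp
qed

lemma nn_integral_abs_power_normal1_pos:
  assumes "v > 0"
  shows "(\<integral>\<^sup>+ y. ennreal (\<bar>y\<bar> ^ p) \<partial>normal1 mu v) > 0"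
proof -
  let ?f = "\<lambda>y::real. ennreal (normal_density mu (sqrt v) y) * ennreal (\<bar>y\<bar> ^ p)"
  have fm: "?f \<in> borel_measurable lborel" by measurable
  have "(\<integral>\<^sup>+ y. ?f y \<partial>lborel) \<noteq> 0"
  proof
    assume "(\<integral>\<^sup>+ y. ?f y \<partial>lborel) = 0"
    then have ae: "AE y in lborel. ?f y = 0" using nn_integral_0_iff_AE[OF fm] by simp
    have N: "{y \<in> space lborel. \<not> ?f y = 0} \<in> sets lborel" using fm by measurable
    have "emeasure lborel {y \<in> space lborel. \<not> ?f y = 0} = 0"
      using ae AE_iff_measurable[OF N refl] by simp
    moreover have "{1..2::real} \<subseteq> {y \<in> space lborel. \<not> ?f y = 0}"
    proof
      fix y :: real assume "y \<in> {1..2}"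
      then have "\<bar>y\<bar> ^ p > 0" by simp
      moreover have "normal_density mu (sqrt v) y > 0"
        using assms by (simp add: normal_density_pos)
      ultimately show "y \<in> {y \<in> space lborel. \<not> ?f y = 0}" by simp
    qed
    then have "emeasure lborel {1..2::real} \<le> emeasure lborel {y \<in> space lborel. \<not> ?f y = 0}"
      using N by (intro emeasure_mono) auto
    ultimately show False by simp
  qed
  then show ?thesis
    using assms by (simp add: normal1_def nn_integral_density zero_less_iff_neq_zero)
qed

lemma gauss_diag_1:
  "gauss_diag (Suc 0) mu v = distr (normal1 (mu 0) v) (state_space (Suc 0)) (\<lambda>y. \<lambda>i\<in>{..<Suc 0}. y)"
proof -
  let ?M = "\<lambda>i. normal1 (mu i) v"
  interpret product_sigma_finite ?M
    unfolding product_sigma_finite_def using prob_space_normal1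
    by (auto intro: prob_space_imp_sigma_finite)
  have I: "{..<Suc 0} = {0}" by auto
  have sets_eq: "sets (Pi\<^sub>M {0} ?M) = sets (state_space (Suc 0))"
    unfolding state_space_def I by (rule sets_PiM_cong) auto
  have proj: "(\<lambda>x. x 0) \<in> Pi\<^sub>M {0} ?M \<rightarrow>\<^sub>M ?M 0" by measurable
  have emb: "(\<lambda>y. \<lambda>i\<in>{0}. y) \<in> ?M 0 \<rightarrow>\<^sub>M Pi\<^sub>M {0} ?M"
    by (rule measurable_PiM_single') (auto simp: PiE_def extensional_def)
  have "distr (?M 0) (state_space (Suc 0)) (\<lambda>y. \<lambda>i\<in>{..<Suc 0}. y)
      = distr (distr (Pi\<^sub>M {0} ?M) (?M 0) (\<lambda>x. x 0)) (Pi\<^sub>M {0} ?M) (\<lambda>y. \<lambda>i\<in>{0}. y)"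
    using distr_singleton[of 0] sets_eq I by (intro distr_cong) auto
  also have "\<dots> = distr (Pi\<^sub>M {0} ?M) (Pi\<^sub>M {0} ?M) ((\<lambda>y. \<lambda>i\<in>{0}. y) \<circ> (\<lambda>x. x 0))"
    by (rule distr_distr[OF emb proj])
  also have "\<dots> = distr (Pi\<^sub>M {0} ?M) (Pi\<^sub>M {0} ?M) (\<lambda>x. x)"
    by (rule distr_cong) (auto simp: space_PiM PiE_def extensional_def fun_eq_iff)
  also have "\<dots> = Pi\<^sub>M {0} ?M" by (rule distr_id)
  finally show ?thesis unfolding gauss_diag_def I by simp
qed

lemma measurable_embed_state_space_1 [measurable]:
  "(\<lambda>y. \<lambda>i\<in>{..<Suc 0}. y) \<in> borel \<rightarrow>\<^sub>M state_space (Suc 0)"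
  unfolding state_space_def by (rule measurable_PiM_single') (auto simp: PiE_def extensional_def)

lemma measurable_gauss_diag_1:
  assumes "(\<lambda>x. mu x 0) \<in> M \<rightarrow>\<^sub>M borel"
  shows "(\<lambda>x. gauss_diag (Suc 0) (mu x) v) \<in> M \<rightarrow>\<^sub>M prob_algebra (state_space (Suc 0))"
  unfolding gauss_diag_1
  by (rule measurable_compose[OF measurable_normal1[OF assms]
        measurable_distr_prob_space[OF measurable_embed_state_space_1]])

lemma nn_integral_gauss_diag_1:
  assumes f: "f \<in> borel_measurable borel"
  shows "(\<integral>\<^sup>+ y. f (y 0) \<partial>gauss_diag (Suc 0) mu v) = (\<integral>\<^sup>+ y. f y \<partial>normal1 (mu 0) v)"
proof -
  have m: "(\<lambda>y. y 0) \<in> state_space (Suc 0) \<rightarrow>\<^sub>M borel"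
    unfolding state_space_def by measurable
  have "(\<integral>\<^sup>+ y. f (y 0) \<partial>gauss_diag (Suc 0) mu v) =
      (\<integral>\<^sup>+ y. f ((\<lambda>i\<in>{..<Suc 0}. y) 0) \<partial>normal1 (mu 0) v)"
    unfolding gauss_diag_1
  proof (rule nn_integral_distr)
    show "(\<lambda>y. \<lambda>i\<in>{..<Suc 0}. y) \<in> normal1 (mu 0) v \<rightarrow>\<^sub>M state_space (Suc 0)"
      by (subst measurable_cong_sets[OF sets_normal1 refl]) (rule measurable_embed_state_space_1)
    show "(\<lambda>y. f (y 0))
        \<in> borel_measurable (distr (normal1 (mu 0) v) (state_space (Suc 0)) (\<lambda>y. \<lambda>i\<in>{..<Suc 0}. y))"
      by (subst measurable_cong_sets[OF sets_distr refl]) (rule measurable_compose[OF m f])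
  qed
  then show ?thesis by simp
qed

lemma AE_gauss_diag_1_degenerate:
  assumes "v \<le> 0"
  shows "AE y in gauss_diag (Suc 0) mu v. y 0 = mu 0"
proof -
  have "Measurable.pred borel (\<lambda>y::real. y = mu 0)" by measurable
  then have "AE y in return borel (mu 0). (\<lambda>i\<in>{..<Suc 0}. y) 0 = mu 0"
    by (subst AE_return) auto
  moreover have "normal1 (mu 0) v = return borel (mu 0)"
    using assms by (simp add: normal1_def)
  ultimately show ?thesis unfolding gauss_diag_1
    by (simp only:, subst AE_distr_iff, auto simp: state_space_def)
qed

section \<open>The GP-ASSM as a Markov chain\<close>

lemma measurable_hist_update:
  "(\<lambda>(h, y). h(Suc t := y)) \<in> hist_space nx t \<Otimes>\<^sub>M state_space nx \<rightarrow>\<^sub>M hist_space nx (Suc t)"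
proof -
  have eq: "(\<lambda>(h, y). h(Suc t := y)) = (\<lambda>\<omega> i. if i = Suc t then snd \<omega> else fst \<omega> i)"
    by (auto simp: fun_eq_iff)
  show ?thesis unfolding eq hist_space_def
  proof (rule measurable_PiM_single')
    fix i assume i: "i \<in> {..Suc t}"
    show "(\<lambda>\<omega>. if i = Suc t then snd \<omega> else fst \<omega> i) \<in>
        (Pi\<^sub>M {..t} (\<lambda>_. state_space nx)) \<Otimes>\<^sub>M state_space nx \<rightarrow>\<^sub>M state_space nx"
    proof (cases "i = Suc t")
      case False
      then have "i \<in> {..t}" using i by auto
      then show ?thesis
        using False by (simp add: measurable_compose[OF measurable_fst measurable_component_singleton])
    qed simp
  qed (auto simp: space_pair_measure space_PiM PiE_def extensional_def Pi_def)
qed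

lemma measurable_hist_component:
  assumes "j \<le> t" "i < nx"
  shows "(\<lambda>h. h j i) \<in> borel_measurable (hist_space nx t)"
proof -
  have "(\<lambda>h. h j) \<in> hist_space nx t \<rightarrow>\<^sub>M state_space nx"
    unfolding hist_space_def by (rule measurable_component_singleton) (use assms in auto)
  moreover have "(\<lambda>x. x i) \<in> state_space nx \<rightarrow>\<^sub>M borel"
    unfolding state_space_def by (rule measurable_component_singleton) (use assms in auto)
  ultimately show ?thesis by (rule measurable_compose)
qed

lemma initial_hist_in_space: "(\<lambda>j\<in>{..0}. restrict x0 {..<nx}) \<in> space (hist_space nx 0)"
  by (auto simp: hist_space_def state_space_def space_PiM)

context
  fixes nx nu X Y sn k mf mb u
  assumes wellposed: "gp_wellposed nx nu X Y sn k mf mb u"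
begin

lemma measurable_gp_step:
  "(\<lambda>h. distr (gp_kernel nx nu X Y sn k mf mb u t h) (hist_space nx (Suc t)) (\<lambda>y. h(Suc t := y)))
      \<in> hist_space nx t \<rightarrow>\<^sub>M prob_algebra (hist_space nx (Suc t))"
proof (rule measurable_distr_prob_space2[OF _ measurable_hist_update])
  show "gp_kernel nx nu X Y sn k mf mb u t \<in> hist_space nx t \<rightarrow>\<^sub>M prob_algebra (state_space nx)"
    using wellposed by (simp add: gp_wellposed_def)
qed

lemma gp_hist_in_prob_algebra:
  "gp_hist nx nu X Y sn k mf mb u x0 t \<in> space (prob_algebra (hist_space nx t))"
proof (induction t)
  case 0
  show ?case using initial_hist_in_space[of x0 nx]
    by (simp add: space_prob_algebra prob_space_return)
next
  case (Suc t)
  show ?case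
    using prob_space_bind'[OF Suc measurable_gp_step] sets_bind'[OF Suc measurable_gp_step]
    by (simp add: space_prob_algebra)
qed

lemma sets_gp_hist: "sets (gp_hist nx nu X Y sn k mf mb u x0 t) = sets (hist_space nx t)"
  using gp_hist_in_prob_algebra by (simp add: space_prob_algebra)

lemma space_gp_hist: "space (gp_hist nx nu X Y sn k mf mb u x0 t) = space (hist_space nx t)"
  using sets_eq_imp_space_eq[OF sets_gp_hist] .

lemma gp_kernel_prob_space:
  assumes "h \<in> space (hist_space nx t)"
  shows "prob_space (gp_kernel nx nu X Y sn k mf mb u t h)"
    and "sets (gp_kernel nx nu X Y sn k mf mb u t h) = sets (state_space nx)"
  using measurable_space[OF wellposed[unfolded gp_wellposed_def, rule_format, of t] assms]
  by (auto simp: space_prob_algebra)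

lemma measurable_hist_update_gp_kernel:
  assumes "h \<in> space (hist_space nx t)"
  shows "(\<lambda>y. h(Suc t := y)) \<in> gp_kernel nx nu X Y sn k mf mb u t h \<rightarrow>\<^sub>M hist_space nx (Suc t)"
  using measurable_Pair2[OF measurable_hist_update assms]
  by (simp add: measurable_cong_sets[OF gp_kernel_prob_space(2)[OF assms] refl])

lemma measurable_gp_step_subprob:
  "(\<lambda>h. distr (gp_kernel nx nu X Y sn k mf mb u t h) (hist_space nx (Suc t)) (\<lambda>y. h(Suc t := y)))
      \<in> gp_hist nx nu X Y sn k mf mb u x0 t \<rightarrow>\<^sub>M subprob_algebra (hist_space nx (Suc t))"
  using measurable_prob_algebraD[OF measurable_gp_step]
  by (subst measurable_cong_sets[OF sets_gp_hist refl])

lemma nn_integral_gp_hist_Suc: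
  assumes f: "f \<in> borel_measurable (hist_space nx (Suc t))"
  shows "(\<integral>\<^sup>+ h. f h \<partial>gp_hist nx nu X Y sn k mf mb u x0 (Suc t)) =
    (\<integral>\<^sup>+ h. (\<integral>\<^sup>+ y. f (h(Suc t := y)) \<partial>gp_kernel nx nu X Y sn k mf mb u t h)
       \<partial>gp_hist nx nu X Y sn k mf mb u x0 t)"
  unfolding gp_hist.simps
proof (subst nn_integral_bind[OF f measurable_gp_step_subprob], rule nn_integral_cong)
  fix h assume "h \<in> space (gp_hist nx nu X Y sn k mf mb u x0 t)"
  then have h: "h \<in> space (hist_space nx t)" by (simp add: space_gp_hist)
  show "(\<integral>\<^sup>+ y. f y
        \<partial>distr (gp_kernel nx nu X Y sn k mf mb u t h) (hist_space nx (Suc t)) (\<lambda>y. h(Suc t := y)))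
      = (\<integral>\<^sup>+ y. f (h(Suc t := y)) \<partial>gp_kernel nx nu X Y sn k mf mb u t h)"
    using f by (intro nn_integral_distr measurable_hist_update_gp_kernel[OF h])
      (simp add: measurable_cong_sets[OF sets_distr refl])
qed

lemma AE_gp_hist_Suc:
  assumes P: "Measurable.pred (hist_space nx (Suc t)) P"
    and ae: "AE h in gp_hist nx nu X Y sn k mf mb u x0 t.
      AE y in gp_kernel nx nu X Y sn k mf mb u t h. P (h(Suc t := y))"
  shows "AE h in gp_hist nx nu X Y sn k mf mb u x0 (Suc t). P h"
  unfolding gp_hist.simps
proof (subst AE_bind[OF measurable_gp_step_subprob P], rule AE_mp[OF ae AE_I2], intro impI)
  fix h assume "h \<in> space (gp_hist nx nu X Y sn k mf mb u x0 t)"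
    and "AE y in gp_kernel nx nu X Y sn k mf mb u t h. P (h(Suc t := y))"
  then show "AE y in distr (gp_kernel nx nu X Y sn k mf mb u t h) (hist_space nx (Suc t))
      (\<lambda>y. h(Suc t := y)). P y"
    using P by (subst AE_distr_iff[OF measurable_hist_update_gp_kernel]) (auto simp: space_gp_hist)
qed

lemma gp_hist_1:
  "gp_hist nx nu X Y sn k mf mb u x0 (Suc 0) =
    distr (gp_kernel nx nu X Y sn k mf mb u 0 (\<lambda>j\<in>{..0}. restrict x0 {..<nx})) (hist_space nx (Suc 0))
      (\<lambda>y. (\<lambda>j\<in>{..0}. restrict x0 {..<nx})(Suc 0 := y))"
  using bind_return[OF measurable_prob_algebraD[OF measurable_gp_step[of 0]] initial_hist_in_space]
  by simp

end

section \<open>Harmonic pulses\<close>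

definition count_multiples :: "nat \<Rightarrow> nat \<Rightarrow> nat" where
  "count_multiples T t = (\<Sum>s<t. if s mod T = 0 then 1 else 0)"

lemma count_multiples_Suc:
  "count_multiples T (Suc t) = count_multiples T t + (if t mod T = 0 then 1 else 0)"
  by (simp add: count_multiples_def)

lemma sum_lessThan_add:
  fixes f :: "nat \<Rightarrow> 'a::comm_monoid_add"
  shows "(\<Sum>s<a + b. f s) = (\<Sum>s<a. f s) + (\<Sum>i<b. f (a + i))"
  by (induction b) (auto simp: add.assoc)

lemma count_multiples_mult:
  assumes "T > 0"
  shows "count_multiples T (T * k) = k"
proof (induction k)
  case (Suc k)
  have "count_multiples T (T * Suc k) = count_multiples T (T * k + T)"
    by (simp add: add.commute)
  also have "\<dots> = count_multiples T (T * k) + (\<Sum>i<T. if (T * k + i) mod T = 0 then 1 else 0)"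
    unfolding count_multiples_def by (rule sum_lessThan_add)
  also have "(\<Sum>i<T. if (T * k + i) mod T = 0 then 1 else 0) = (\<Sum>i<T. if i = 0 then 1 else (0::nat))"
    by (rule sum.cong) auto
  finally show ?case using Suc assms by simp
qed (simp add: count_multiples_def)

definition pulse :: "nat \<Rightarrow> nat \<Rightarrow> real" where
  "pulse T s = (if s mod T = 0 then 1 / (real (count_multiples T s) + 1) else 0)"

lemma pulse_nonneg: "pulse T s \<ge> 0"
  by (simp add: pulse_def)

lemma pulse_pos: "s mod T = 0 \<Longrightarrow> pulse T s > 0"
  by (simp add: pulse_def)

lemma pulse_0 [simp]: "pulse T 0 = 1"
  by (simp add: pulse_def count_multiples_def)

lemma sum_pulse:
  assumes "f 0 = 0"
  shows "(\<Sum>s<t. f (pulse T s)) = (\<Sum>j<count_multiples T t. f (1 / (real j + 1)))"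
  by (induction t) (auto simp: count_multiples_Suc pulse_def assms, simp add: count_multiples_def)

definition pulse_sum :: "nat \<Rightarrow> nat \<Rightarrow> real" where
  "pulse_sum T t = (\<Sum>s<t. pulse T s)"

lemma pulse_sum_0 [simp]: "pulse_sum T 0 = 0"
  and pulse_sum_Suc: "pulse_sum T (Suc t) = pulse_sum T t + pulse T t"
  by (simp_all add: pulse_sum_def)

lemma pulse_sum_1 [simp]: "pulse_sum T (Suc 0) = 1"
  by (simp add: pulse_sum_def)

lemma pulse_sum_eq_harm: "pulse_sum T t = harm (count_multiples T t)"
  using sum_pulse[where f = "\<lambda>x. x" and T = T and t = t]
  by (simp add: pulse_sum_def harm_altdef inverse_eq_divide add.commute)

lemma pulse_sum_unbounded:
  assumes "T > 0"
  shows "\<exists>t. B \<le> pulse_sum T (Suc t)"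
proof -
  have "\<forall>\<^sub>F n in sequentially. B \<le> harm n"
    using harm_at_top by (simp add: filterlim_at_top)
  then obtain N where N: "\<And>n. N \<le> n \<Longrightarrow> B \<le> harm n"
    by (auto simp: eventually_sequentially)
  have "count_multiples T (Suc (T * N)) = Suc N"
    using count_multiples_mult[OF assms, of N] by (simp add: count_multiples_Suc)
  then have "B \<le> pulse_sum T (Suc (T * N))"
    using N[of "Suc N"] by (simp add: pulse_sum_eq_harm)
  then show ?thesis ..
qed

lemma sum_pulse_squares_le: "(\<Sum>s<t. (pulse T s)\<^sup>2) \<le> pi\<^sup>2 / 6"
proof -
  have "(\<Sum>s<t. (pulse T s)\<^sup>2) = (\<Sum>j<count_multiples T t. 1 / (real j + 1)\<^sup>2)"
    using sum_pulse[where f = "\<lambda>x. x\<^sup>2" and T = T and t = t] by (simp add: power_divide)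
  also have "\<dots> \<le> (\<Sum>j. 1 / (real j + 1)\<^sup>2)"
    using inverse_squares_sums by (intro sum_le_suminf) (auto simp: sums_iff add.commute)
  also have "\<dots> = pi\<^sup>2 / 6"
    using inverse_squares_sums by (simp add: sums_iff add.commute)
  finally show ?thesis .
qed

section \<open>The pulse-kernel GP-ASSM\<close>

(* Coordinate 1 of xi = [x; u] is the input u_t = t, so along a trajectory the kernel takes the
   values pulse T s * pulse T t. *)
definition pulse_kernel :: "nat \<Rightarrow> real vec \<Rightarrow> real vec \<Rightarrow> real" where
  "pulse_kernel T a b = pulse T (nat \<lfloor>a $ 1\<rfloor>) * pulse T (nat \<lfloor>b $ 1\<rfloor>)"

definition state_mean :: "real vec \<Rightarrow> real" where
  "state_mean a = a $ 0"

definition time_input :: "nat \<Rightarrow> nat \<Rightarrow> real" where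
  "time_input t = (\<lambda>_. real t)"

definition no_train_inputs :: "real mat" where
  "no_train_inputs = 0\<^sub>m 2 0"

definition no_train_outputs :: "real mat" where
  "no_train_outputs = 0\<^sub>m 0 1"

abbreviation pulse_mean :: "nat \<Rightarrow> enat \<Rightarrow> nat \<Rightarrow> (nat \<Rightarrow> nat \<Rightarrow> real) \<Rightarrow> real" where
  "pulse_mean T mb t h \<equiv> fmean (Suc 0) (Suc 0) no_train_inputs no_train_outputs 1 (pulse_kernel T)
     state_mean mb time_input t h 0"

abbreviation pulse_var :: "nat \<Rightarrow> enat \<Rightarrow> nat \<Rightarrow> (nat \<Rightarrow> nat \<Rightarrow> real) \<Rightarrow> real" where
  "pulse_var T mb t h \<equiv> fvar (Suc 0) (Suc 0) no_train_inputs 1 (pulse_kernel T) mb time_input t h"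

abbreviation pulse_step ::
  "nat \<Rightarrow> enat \<Rightarrow> nat \<Rightarrow> (nat \<Rightarrow> nat \<Rightarrow> real) \<Rightarrow> (nat \<Rightarrow> real) measure" where
  "pulse_step T mb t \<equiv> gp_kernel (Suc 0) (Suc 0) no_train_inputs no_train_outputs 1 (pulse_kernel T)
     state_mean mb time_input t"

abbreviation pulse_hist :: "nat \<Rightarrow> enat \<Rightarrow> nat \<Rightarrow> (nat \<Rightarrow> nat \<Rightarrow> real) measure" where
  "pulse_hist T mb t \<equiv> gp_hist (Suc 0) (Suc 0) no_train_inputs no_train_outputs 1 (pulse_kernel T)
     state_mean mb time_input (\<lambda>_. 0) t"

abbreviation pulse_moment :: "nat \<Rightarrow> enat \<Rightarrow> nat \<Rightarrow> nat \<Rightarrow> ennreal" where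
  "pulse_moment T mb p t \<equiv> gp_moment (Suc 0) (Suc 0) no_train_inputs no_train_outputs 1
     (pulse_kernel T) state_mean mb time_input (\<lambda>_. 0) p t"

lemma xi_of_time_input [simp]:
  "xi_of (Suc 0) (Suc 0) x (time_input t) $ 0 = x 0"
  "xi_of (Suc 0) (Suc 0) x (time_input t) $ Suc 0 = real t"
  by (simp_all add: xi_of_def time_input_def)

lemma pulse_kernel_xi_of [simp]:
  "pulse_kernel T (xi_of (Suc 0) (Suc 0) x (time_input s)) (xi_of (Suc 0) (Suc 0) y (time_input t))
     = pulse T s * pulse T t"
  by (simp add: pulse_kernel_def)

lemma mem_len_le: "mem_len mb t \<le> t"
  unfolding mem_len_def by (cases mb) auto

definition window_pulses :: "nat \<Rightarrow> enat \<Rightarrow> nat \<Rightarrow> real vec" where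
  "window_pulses T mb t = vec (mem_len mb t) (\<lambda>r. pulse T (t - mem_len mb t + r))"

definition window_increments :: "enat \<Rightarrow> nat \<Rightarrow> (nat \<Rightarrow> nat \<Rightarrow> real) \<Rightarrow> real vec" where
  "window_increments mb t h =
     vec (mem_len mb t) (\<lambda>r. h (t - mem_len mb t + 1 + r) 0 - h (t - mem_len mb t + r) 0)"

lemma dim_window_pulses [simp]: "dim_vec (window_pulses T mb t) = mem_len mb t"
  and dim_window_increments [simp]: "dim_vec (window_increments mb t h) = mem_len mb t"
  by (simp_all add: window_pulses_def window_increments_def)

lemma Kmem_pulse_kernel:
  "Kmem (Suc 0) (Suc 0) no_train_inputs 1 (pulse_kernel T) mb time_input t h
     = outer_prod (window_pulses T mb t)"
  using mem_len_le[of mb t]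
  by (intro eq_matI) (auto simp: Kmem_def Let_def no_train_inputs_def cols_def index_mat_four_block
      gram_def outer_prod_def window_pulses_def)

lemma kvec_pulse_kernel:
  "kvec (pulse_kernel T) (xi_of (Suc 0) (Suc 0) (h t) (time_input t))
       (Xmem (Suc 0) (Suc 0) no_train_inputs mb time_input t h)
     = pulse T t \<cdot>\<^sub>v window_pulses T mb t"
  using mem_len_le[of mb t]
  by (intro eq_vecI) (auto simp: Xmem_def no_train_inputs_def cols_def kvec_def window_pulses_def)

lemma Ymem_col_minus_state_mean:
  "Ymem_col no_train_outputs mb t h 0
       - mvec state_mean (Xmem (Suc 0) (Suc 0) no_train_inputs mb time_input t h)
     = window_increments mb t h"
  using mem_len_le[of mb t]
  by (intro eq_vecI) (auto simp: Xmem_def Ymem_col_def no_train_inputs_def no_train_outputs_def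
      cols_def mvec_def state_mean_def window_increments_def Let_def)

lemma pulse_mean_eq:
  "pulse_mean T mb t h = h t 0 + pulse T t * (window_pulses T mb t \<bullet> window_increments mb t h)
     / (window_pulses T mb t \<bullet> window_pulses T mb t)"
  unfolding fmean_def Let_def kvec_pulse_kernel Ymem_col_minus_state_mean Kmem_pulse_kernel
  by (simp add: scalar_prod_pinv_outer_prod state_mean_def)

lemma pulse_var_eq:
  "pulse_var T mb t h =
     (if window_pulses T mb t \<bullet> window_pulses T mb t = 0 then (pulse T t)\<^sup>2 else 0)"
  unfolding fvar_def Let_def kvec_pulse_kernel Kmem_pulse_kernel
  by (simp add: scalar_prod_pinv_outer_prod power2_eq_square)

lemma measurable_pulse_mean: "(\<lambda>h. pulse_mean T mb t h) \<in> borel_measurable (hist_space (Suc 0) t)"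
proof -
  have inc: "(\<lambda>h. window_pulses T mb t \<bullet> window_increments mb t h)
      \<in> borel_measurable (hist_space (Suc 0) t)"
    unfolding scalar_prod_def using mem_len_le[of mb t]
    by (auto intro!: borel_measurable_sum borel_measurable_times borel_measurable_diff
        measurable_hist_component simp: window_increments_def)
  show ?thesis unfolding pulse_mean_eq
    by (intro borel_measurable_add borel_measurable_divide borel_measurable_times measurable_const
        measurable_hist_component inc) simp_all
qed

lemma gp_wellposed_pulse:
  "gp_wellposed (Suc 0) (Suc 0) no_train_inputs no_train_outputs 1 (pulse_kernel T) state_mean mb time_input"
  unfolding gp_wellposed_def gp_kernel_def pulse_var_eq
  by (intro allI measurable_gauss_diag_1 measurable_pulse_mean)

lemmas sets_pulse_hist = sets_gp_hist[OF gp_wellposed_pulse]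

lemma nn_integral_pulse_step:
  assumes "f \<in> borel_measurable borel"
  shows "(\<integral>\<^sup>+ y. f (y 0) \<partial>pulse_step T mb t h)
    = (\<integral>\<^sup>+ y. f y \<partial>normal1 (pulse_mean T mb t h) (pulse_var T mb t h))"
  unfolding gp_kernel_def by (rule nn_integral_gauss_diag_1[OF assms])

lemma AE_pulse_step_degenerate:
  "pulse_var T mb t h = 0 \<Longrightarrow> AE y in pulse_step T mb t h. y 0 = pulse_mean T mb t h"
  unfolding gp_kernel_def by (rule AE_gauss_diag_1_degenerate) simp

lemma pulse_mean_0: "pulse_mean T mb 0 h = h 0 0"
  and pulse_var_0: "pulse_var T mb 0 h = 1"
  using mem_len_le[of mb 0] by (simp_all add: pulse_mean_eq pulse_var_eq scalar_prod_def)

lemma nn_integral_pulse_hist_first_state: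
  assumes g: "g \<in> borel_measurable borel"
  shows "(\<integral>\<^sup>+ h. g (h (Suc 0) 0) \<partial>pulse_hist T mb (Suc n)) = (\<integral>\<^sup>+ y. g y \<partial>normal1 0 1)"
proof (induction n)
  case 0
  let ?h0 = "\<lambda>j\<in>{..0}. restrict (\<lambda>_. 0) {..<Suc 0}"
  have h0: "?h0 \<in> space (hist_space (Suc 0) 0)" by (rule initial_hist_in_space)
  have "(\<integral>\<^sup>+ h. g (h (Suc 0) 0) \<partial>pulse_hist T mb (Suc 0)) = (\<integral>\<^sup>+ y. g (y 0) \<partial>pulse_step T mb 0 ?h0)"
    unfolding gp_hist_1[OF gp_wellposed_pulse]
    using g measurable_hist_component[of "Suc 0" "Suc 0" 0 "Suc 0"]
    by (subst nn_integral_distr[OF measurable_hist_update_gp_kernel[OF gp_wellposed_pulse h0]])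
      (simp_all add: measurable_compose[OF _ g])
  also have "\<dots> = (\<integral>\<^sup>+ y. g y \<partial>normal1 0 1)"
    by (simp add: nn_integral_pulse_step[OF g] pulse_mean_0 pulse_var_0)
  finally show ?case .
next
  case (Suc n)
  have f: "(\<lambda>h. g (h (Suc 0) 0)) \<in> borel_measurable (hist_space (Suc 0) (Suc (Suc n)))"
    by (rule measurable_compose[OF measurable_hist_component g]) simp_all
  have "(\<integral>\<^sup>+ h. g (h (Suc 0) 0) \<partial>pulse_hist T mb (Suc (Suc n)))
      = (\<integral>\<^sup>+ h. (\<integral>\<^sup>+ y. g ((h(Suc (Suc n) := y)) (Suc 0) 0) \<partial>pulse_step T mb (Suc n) h)
          \<partial>pulse_hist T mb (Suc n))"
    by (rule nn_integral_gp_hist_Suc[OF gp_wellposed_pulse f])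
  also have "\<dots> = (\<integral>\<^sup>+ h. g (h (Suc 0) 0) \<partial>pulse_hist T mb (Suc n))"
  proof (rule nn_integral_cong)
    fix h assume "h \<in> space (pulse_hist T mb (Suc n))"
    then have h: "h \<in> space (hist_space (Suc 0) (Suc n))"
      by (simp only: space_gp_hist[OF gp_wellposed_pulse])
    show "(\<integral>\<^sup>+ y. g ((h(Suc (Suc n) := y)) (Suc 0) 0) \<partial>pulse_step T mb (Suc n) h) = g (h (Suc 0) 0)"
      using prob_space.emeasure_space_1[OF gp_kernel_prob_space(1)[OF gp_wellposed_pulse h]]
      by (simp add: nn_integral_const)
  qed
  also have "\<dots> = (\<integral>\<^sup>+ y. g y \<partial>normal1 0 1)"
    by (rule Suc.IH)
  finally show ?case .
qed

lemma sym_kernel_on_pulse_kernel: "sym_kernel_on n (pulse_kernel T)"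
  by (simp add: sym_kernel_on_def pulse_kernel_def mult.commute)

lemma psd_kernel_on_pulse_kernel: "psd_kernel_on n (pulse_kernel T)"
  unfolding psd_kernel_on_def
proof (intro allI impI)
  fix zs :: "real vec list" and c :: "nat \<Rightarrow> real"
  let ?f = "\<lambda>i. c i * pulse T (nat \<lfloor>zs ! i $ 1\<rfloor>)"
  have "(\<Sum>i<length zs. \<Sum>j<length zs. c i * c j * pulse_kernel T (zs ! i) (zs ! j))
      = (\<Sum>i<length zs. ?f i) * (\<Sum>j<length zs. ?f j)"
    by (simp add: pulse_kernel_def sum_product mult_ac)
  then show "(\<Sum>i<length zs. \<Sum>j<length zs. c i * c j * pulse_kernel T (zs ! i) (zs ! j)) \<ge> 0"
    by simp
qed

lemma abs_le_vnorm:
  assumes "i < dim_vec v"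
  shows "\<bar>v $ i\<bar> \<le> vnorm v"
proof -
  have "(v $ i)\<^sup>2 \<le> (\<Sum>j<dim_vec v. (v $ j)\<^sup>2)"
    using assms by (intro member_le_sum) auto
  then show ?thesis unfolding vnorm_def by (metis real_sqrt_abs real_sqrt_le_mono)
qed

lemma continuous_mean_on_state_mean:
  assumes "0 < n"
  shows "continuous_mean_on n state_mean"
  unfolding continuous_mean_on_def
proof (intro ballI allI impI exI conjI)
  fix a b :: "real vec" and e :: real
  assume a: "a \<in> carrier_vec n" and b: "b \<in> carrier_vec n" and e: "vnorm (b - a) < e"
  have "\<bar>(b - a) $ 0\<bar> \<le> vnorm (b - a)" using a assms by (intro abs_le_vnorm) simp
  then show "\<bar>state_mean b - state_mean a\<bar> < e" using a b assms e by (simp add: state_mean_def)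
qed

section \<open>Short memory: bounded moments\<close>

lemma abs_power_le_fact_exp: "\<bar>x\<bar> ^ p \<le> fact p * (exp x + exp (- x :: real))"
proof -
  have "\<bar>x\<bar> ^ p / fact p \<le> (\<Sum>n. \<bar>x\<bar> ^ n /\<^sub>R fact n)"
    using sum_le_suminf[OF summable_exp_generic, of "{p}" "\<bar>x\<bar>"]
    by (simp add: divide_inverse mult.commute)
  also have "\<dots> = exp \<bar>x\<bar>" by (simp add: exp_def)
  also have "\<dots> \<le> exp x + exp (- x)" by (cases "x \<ge> 0") auto
  finally show ?thesis by (simp add: field_simps)
qed

lemma nn_integral_abs_power_le_exp:
  assumes f: "f \<in> borel_measurable M"
  shows "(\<integral>\<^sup>+ x. ennreal (\<bar>f x\<bar> ^ p) \<partial>M)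
    \<le> ennreal (fact p) * ((\<integral>\<^sup>+ x. ennreal (exp (f x)) \<partial>M) + (\<integral>\<^sup>+ x. ennreal (exp (- f x)) \<partial>M))"
proof -
  have "(\<integral>\<^sup>+ x. ennreal (\<bar>f x\<bar> ^ p) \<partial>M)
      \<le> (\<integral>\<^sup>+ x. ennreal (fact p) * (ennreal (exp (f x)) + ennreal (exp (- f x))) \<partial>M)"
    using abs_power_le_fact_exp
    by (intro nn_integral_mono)
      (simp add: ennreal_mult[symmetric] ennreal_plus[symmetric] del: ennreal_plus)
  also have "\<dots> = ennreal (fact p)
      * ((\<integral>\<^sup>+ x. ennreal (exp (f x)) \<partial>M) + (\<integral>\<^sup>+ x. ennreal (exp (- f x)) \<partial>M))"
    using f by (simp add: nn_integral_cmult nn_integral_add)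
  finally show ?thesis .
qed

lemma window_pulses_short:
  assumes "t mod Suc m = 0"
  shows "window_pulses (Suc m) (enat m) t \<bullet> window_pulses (Suc m) (enat m) t = 0"
proof -
  let ?ml = "mem_len (enat m) t"
  have "pulse (Suc m) (t - ?ml + r) = 0" if r: "r < ?ml" for r
  proof -
    have ml: "?ml \<le> m" "?ml \<le> t" by (auto simp: mem_len_def)
    \<comment> \<open>the distance to the multiple \<open>t\<close> is positive and smaller than the period\<close>
    have "\<not> Suc m dvd (t - ?ml + r)"
    proof
      assume "Suc m dvd (t - ?ml + r)"
      moreover have "Suc m dvd t" using assms by (simp add: mod_eq_0_iff_dvd)
      ultimately have "Suc m dvd t - (t - ?ml + r)" by (rule dvd_diff_nat[rotated])
      moreover have "t - (t - ?ml + r) = ?ml - r" using ml r by simp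
      ultimately have "Suc m \<le> ?ml - r" using r by (auto dest: dvd_imp_le)
      then show False using ml by simp
    qed
    then show ?thesis by (simp add: pulse_def mod_eq_0_iff_dvd)
  qed
  then show ?thesis unfolding scalar_prod_def window_pulses_def by simp
qed

lemma pulse_mean_short: "pulse_mean (Suc m) (enat m) t h = h t 0"
  and pulse_var_short: "pulse_var (Suc m) (enat m) t h = (pulse (Suc m) t)\<^sup>2"
proof -
  have "pulse (Suc m) t = 0 \<or> window_pulses (Suc m) (enat m) t \<bullet> window_pulses (Suc m) (enat m) t = 0"
    using window_pulses_short by (cases "t mod Suc m = 0") (simp_all add: pulse_def)
  then show "pulse_mean (Suc m) (enat m) t h = h t 0"
    and "pulse_var (Suc m) (enat m) t h = (pulse (Suc m) t)\<^sup>2"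
    by (elim disjE; simp add: pulse_mean_eq pulse_var_eq)+
qed

lemma nn_integral_exp_pulse_hist_short:
  "(\<integral>\<^sup>+ h. ennreal (exp (c * h t 0)) \<partial>pulse_hist (Suc m) (enat m) t)
     = ennreal (exp (c\<^sup>2 / 2 * (\<Sum>s<t. (pulse (Suc m) s)\<^sup>2)))"
proof -
  have exp_meas: "(\<lambda>z. ennreal (exp (c * z))) \<in> borel_measurable borel" by measurable
  have f: "(\<lambda>h. ennreal (exp (c * h j 0))) \<in> borel_measurable (hist_space (Suc 0) t')"
    if "j \<le> t'" for j t'
    by (rule measurable_compose[OF measurable_hist_component exp_meas]) (use that in simp_all)
  show ?thesis
  proof (induction t)
    case 0
    show ?case
      by (simp only: gp_hist.simps nn_integral_return[OF initial_hist_in_space f[OF order_refl]]) simp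
  next
    case (Suc t)
    let ?H = "pulse_hist (Suc m) (enat m) t" and ?L = "pulse (Suc m) t"
    have "(\<integral>\<^sup>+ h. ennreal (exp (c * h (Suc t) 0)) \<partial>pulse_hist (Suc m) (enat m) (Suc t))
        = (\<integral>\<^sup>+ h. (\<integral>\<^sup>+ y. ennreal (exp (c * (h(Suc t := y)) (Suc t) 0))
            \<partial>pulse_step (Suc m) (enat m) t h) \<partial>?H)"
      by (rule nn_integral_gp_hist_Suc[OF gp_wellposed_pulse f[OF order_refl]])
    also have "\<dots> = (\<integral>\<^sup>+ h. ennreal (exp (c * h t 0 + c\<^sup>2 * max (?L\<^sup>2) 0 / 2)) \<partial>?H)"
      using nn_integral_pulse_step[OF exp_meas]
      by (simp only: fun_upd_same nn_integral_exp_normal1 pulse_mean_short pulse_var_short)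
    also have "\<dots> = (\<integral>\<^sup>+ h. ennreal (exp (c * h t 0)) * ennreal (exp (c\<^sup>2 / 2 * ?L\<^sup>2)) \<partial>?H)"
      by (simp add: exp_add ennreal_mult)
    also have "\<dots> = (\<integral>\<^sup>+ h. ennreal (exp (c * h t 0)) \<partial>?H) * ennreal (exp (c\<^sup>2 / 2 * ?L\<^sup>2))"
      by (rule nn_integral_multc) (subst measurable_cong_sets[OF sets_pulse_hist refl], rule f, simp)
    also have "\<dots> = ennreal (exp (c\<^sup>2 / 2 * (\<Sum>s<Suc t. (pulse (Suc m) s)\<^sup>2)))"
      by (simp add: Suc.IH ennreal_mult[symmetric] exp_add[symmetric] distrib_left)
    finally show ?case .
  qed
qed

lemma pulse_moment_short_le:
  "pulse_moment (Suc m) (enat m) p t \<le> ennreal (2 * fact p * exp (pi\<^sup>2 / 12))"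
proof -
  let ?S = "\<Sum>s<t. (pulse (Suc m) s)\<^sup>2"
  have M: "(\<lambda>h. h t 0) \<in> borel_measurable (pulse_hist (Suc m) (enat m) t)"
    using measurable_hist_component[of t t 0 "Suc 0"]
    by (simp add: measurable_cong_sets[OF sets_pulse_hist refl])
  have "pulse_moment (Suc m) (enat m) p t
      \<le> ennreal (fact p) * (ennreal (exp (?S / 2)) + ennreal (exp (?S / 2)))"
    using nn_integral_abs_power_le_exp[OF M, of p]
      nn_integral_exp_pulse_hist_short[where c = 1 and t = t and m = m]
      nn_integral_exp_pulse_hist_short[where c = "-1" and t = t and m = m]
    by (simp add: gp_moment_def)
  also have "\<dots> \<le> ennreal (2 * fact p * exp (pi\<^sup>2 / 12))"
    using sum_pulse_squares_le[where T = "Suc m" and t = t]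
    by (simp add: ennreal_mult[symmetric] ennreal_plus[symmetric] del: ennreal_plus)
  finally show ?thesis .
qed

lemma SUP_pulse_moment_short: "(SUP t. pulse_moment (Suc m) (enat m) p t) < \<infinity>"
  by (rule le_less_trans[OF SUP_least[OF pulse_moment_short_le]]) simp

section \<open>Long memory: unbounded moments\<close>

lemma SUP_mult_ennreal_unbounded:
  assumes "0 < c" and unbounded: "\<And>B. \<exists>t. B \<le> f t"
  shows "(SUP t. c * ennreal (f t)) = \<infinity>"
proof -
  have "(SUP t. ennreal (f t)) = \<infinity>"
    unfolding infinity_ennreal_def SUP_eq_top_iff
  proof (intro allI impI)
    fix x :: ennreal assume "x < \<top>"
    then obtain r where r: "x = ennreal r" "0 \<le> r" by (cases x) auto
    obtain t where "r + 1 \<le> f t" using unbounded by blast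
    then have "x < ennreal (f t)" using r by (simp add: ennreal_lessI)
    then show "\<exists>t\<in>UNIV. x < ennreal (f t)" by blast
  qed
  then show ?thesis
    using assms(1) by (simp only: SUP_mult_left_ennreal[symmetric]) (simp add: ennreal_mult_top)
qed

lemma window_pulses_long:
  assumes mb': "enat m < mb'" and t: "t mod Suc m = 0" "Suc m \<le> t"
  shows "window_pulses (Suc m) mb' t \<bullet> window_pulses (Suc m) mb' t > 0"
proof -
  let ?v = "window_pulses (Suc m) mb' t" and ?ml = "mem_len mb' t"
  have ml: "Suc m \<le> ?ml" "?ml \<le> t"
  proof -
    show "?ml \<le> t" by (rule mem_len_le)
    show "Suc m \<le> ?ml"
    proof (cases "enat t \<le> mb'")
      case False
      then obtain n where "mb' = enat n" by (cases mb') auto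
      then show ?thesis using False mb' by (simp add: mem_len_def)
    qed (use t in \<open>simp add: mem_len_def\<close>)
  qed
  \<comment> \<open>the window reaches back to the previous multiple \<open>t - Suc m\<close>\<close>
  let ?r = "?ml - Suc m"
  have r: "?r < dim_vec ?v" using ml by simp
  have "?v $ ?r = pulse (Suc m) (t - Suc m)"
    using ml by (simp add: window_pulses_def)
  also have "\<dots> > 0"
    using t by (intro pulse_pos) (simp add: mod_eq_0_iff_dvd dvd_diff_nat)
  finally have "0 < (?v $ ?r)\<^sup>2" by simp
  also have "\<dots> \<le> ?v \<bullet> ?v"
    using r unfolding scalar_prod_def power2_eq_square
    by (intro member_le_sum[of ?r "{0..<dim_vec ?v}" "\<lambda>i. ?v $ i * ?v $ i"]) auto
  finally show ?thesis .
qed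

lemma pulse_var_long:
  assumes mb': "enat m < mb'" and t: "0 < t"
  shows "pulse_var (Suc m) mb' t h = 0"
proof (cases "t mod Suc m = 0")
  case True
  then have "Suc m \<le> t" using t by (auto simp: mod_eq_0_iff_dvd dest: dvd_imp_le)
  then show ?thesis using window_pulses_long[OF mb' True] by (simp add: pulse_var_eq)
next
  case False
  then show ?thesis by (simp add: pulse_var_eq pulse_def)
qed

definition scaled_pulse_sums :: "nat \<Rightarrow> nat \<Rightarrow> (nat \<Rightarrow> nat \<Rightarrow> real) \<Rightarrow> bool" where
  "scaled_pulse_sums T t h \<longleftrightarrow> (\<forall>j\<in>{..t}. h j 0 = pulse_sum T j * h (Suc 0) 0)"

lemma measurable_scaled_pulse_sums:
  assumes "0 < t"
  shows "Measurable.pred (hist_space (Suc 0) t) (scaled_pulse_sums T t)"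
  unfolding scaled_pulse_sums_def
proof (intro pred_intros_finite finite_atMost)
  fix j assume "j \<in> {..t}"
  then have "Measurable.pred (hist_space (Suc 0) t) (\<lambda>h. h j 0 - pulse_sum T j * h (Suc 0) 0 = 0)"
    using assms by (intro pred_eq_const1[where N = borel] borel_measurable_diff borel_measurable_times
        measurable_const measurable_hist_component) auto
  then show "Measurable.pred (hist_space (Suc 0) t) (\<lambda>h. h j 0 = pulse_sum T j * h (Suc 0) 0)"
    by simp
qed

lemma scaled_pulse_sumsD:
  "scaled_pulse_sums T t h \<Longrightarrow> j \<le> t \<Longrightarrow> h j 0 = pulse_sum T j * h (Suc 0) 0"
  by (simp add: scaled_pulse_sums_def)

lemma window_increments_scaled_pulse_sums:
  assumes "scaled_pulse_sums T t h"
  shows "window_increments mb t h = h (Suc 0) 0 \<cdot>\<^sub>v window_pulses T mb t"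
proof (rule eq_vecI)
  fix r assume "r < dim_vec (h (Suc 0) 0 \<cdot>\<^sub>v window_pulses T mb t)"
  then have r: "r < mem_len mb t" by simp
  let ?s = "t - mem_len mb t + r"
  have s: "Suc ?s \<le> t" "t - mem_len mb t + 1 + r = Suc ?s"
    using r mem_len_le[of mb t] by linarith+
  have "h (Suc ?s) 0 - h ?s 0 = (pulse_sum T (Suc ?s) - pulse_sum T ?s) * h (Suc 0) 0"
    using scaled_pulse_sumsD[OF assms s(1)] scaled_pulse_sumsD[OF assms, of ?s] s(1)
    by (simp add: left_diff_distrib)
  then show "window_increments mb t h $ r = (h (Suc 0) 0 \<cdot>\<^sub>v window_pulses T mb t) $ r"
    using r by (simp add: window_increments_def window_pulses_def s(2) pulse_sum_Suc mult.commute)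
qed simp

lemma pulse_mean_long:
  assumes mb': "enat m < mb'" and t: "0 < t" and h: "scaled_pulse_sums (Suc m) t h"
  shows "pulse_mean (Suc m) mb' t h = pulse_sum (Suc m) (Suc t) * h (Suc 0) 0"
proof -
  let ?v = "window_pulses (Suc m) mb' t" and ?L = "pulse (Suc m) t"
  have L: "?L * (?v \<bullet> ?v) / (?v \<bullet> ?v) = ?L"
  proof (cases "t mod Suc m = 0")
    case True
    then have "Suc m \<le> t" using t by (auto simp: mod_eq_0_iff_dvd dest: dvd_imp_le)
    then show ?thesis using window_pulses_long[OF mb' True] by simp
  qed (simp add: pulse_def)
  have "pulse_mean (Suc m) mb' t h = h t 0 + h (Suc 0) 0 * (?L * (?v \<bullet> ?v) / (?v \<bullet> ?v))"
    by (simp add: pulse_mean_eq window_increments_scaled_pulse_sums[OF h] ac_simps)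
  also have "\<dots> = pulse_sum (Suc m) (Suc t) * h (Suc 0) 0"
    by (simp only: L scaled_pulse_sumsD[OF h order_refl] pulse_sum_Suc) (simp add: algebra_simps)
  finally show ?thesis .
qed

lemma scaled_pulse_sums_fun_upd:
  assumes h: "scaled_pulse_sums T t h" and y: "y 0 = pulse_sum T (Suc t) * h (Suc 0) 0" and "0 < t"
  shows "scaled_pulse_sums T (Suc t) (h(Suc t := y))"
  unfolding scaled_pulse_sums_def
proof
  fix j assume "j \<in> {..Suc t}"
  then consider "j \<le> t" | "j = Suc t" by (auto simp: le_Suc_eq)
  then show "(h(Suc t := y)) j 0 = pulse_sum T j * (h(Suc t := y)) (Suc 0) 0"
  proof cases
    case 1
    then show ?thesis using scaled_pulse_sumsD[OF h 1] \<open>0 < t\<close> by simp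
  qed (use y \<open>0 < t\<close> in simp)
qed

lemma AE_pulse_step_long:
  assumes mb': "enat m < mb'" and t: "0 < t" and h: "scaled_pulse_sums (Suc m) t h"
  shows "AE y in pulse_step (Suc m) mb' t h. scaled_pulse_sums (Suc m) (Suc t) (h(Suc t := y))"
proof -
  have "AE y in pulse_step (Suc m) mb' t h. y 0 = pulse_mean (Suc m) mb' t h"
    by (rule AE_pulse_step_degenerate[OF pulse_var_long[OF mb' t]])
  then show ?thesis
    by eventually_elim
      (rule scaled_pulse_sums_fun_upd[OF h _ t], simp only: pulse_mean_long[OF mb' t h])
qed

lemma AE_scaled_pulse_sums:
  assumes mb': "enat m < mb'"
  shows "AE h in pulse_hist (Suc m) mb' (Suc n). scaled_pulse_sums (Suc m) (Suc n) h"
proof (induction n)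
  case 0
  let ?h0 = "\<lambda>j\<in>{..0}. restrict (\<lambda>_. 0) {..<Suc 0}"
  have h0: "?h0 \<in> space (hist_space (Suc 0) 0)" by (rule initial_hist_in_space)
  have P: "{h \<in> space (hist_space (Suc 0) (Suc 0)). scaled_pulse_sums (Suc m) (Suc 0) h}
      \<in> sets (hist_space (Suc 0) (Suc 0))"
    using measurable_scaled_pulse_sums[of "Suc 0" "Suc m"] by simp
  have "scaled_pulse_sums (Suc m) (Suc 0) (?h0(Suc 0 := y))" for y :: "nat \<Rightarrow> real"
    unfolding scaled_pulse_sums_def
  proof
    fix j assume "j \<in> {..Suc 0}"
    then consider "j = 0" | "j = Suc 0" by fastforce
    then show "(?h0(Suc 0 := y)) j 0 = pulse_sum (Suc m) j * (?h0(Suc 0 := y)) (Suc 0) 0"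
      by cases simp_all
  qed
  then show ?case
    unfolding gp_hist_1[OF gp_wellposed_pulse]
    by (subst AE_distr_iff[OF measurable_hist_update_gp_kernel[OF gp_wellposed_pulse h0] P]) simp
next
  case (Suc n)
  have "AE h in pulse_hist (Suc m) mb' (Suc n). AE y in pulse_step (Suc m) mb' (Suc n) h.
      scaled_pulse_sums (Suc m) (Suc (Suc n)) (h(Suc (Suc n) := y))"
    using Suc.IH by eventually_elim (rule AE_pulse_step_long[OF mb' zero_less_Suc])
  then show ?case
    by (rule AE_gp_hist_Suc[OF gp_wellposed_pulse measurable_scaled_pulse_sums[OF zero_less_Suc]])
qed

lemma pulse_moment_long:
  assumes mb': "enat m < mb'"
  shows "pulse_moment (Suc m) mb' p (Suc n)
    = ennreal (pulse_sum (Suc m) (Suc n) ^ p) * (\<integral>\<^sup>+ y. ennreal (\<bar>y\<bar> ^ p) \<partial>normal1 0 1)"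
proof -
  let ?H = "pulse_sum (Suc m) (Suc n)"
  have g: "(\<lambda>y::real. ennreal (\<bar>y\<bar> ^ p)) \<in> borel_measurable borel" by measurable
  have "pulse_moment (Suc m) mb' p (Suc n)
      = (\<integral>\<^sup>+ h. ennreal (\<bar>h (Suc n) 0\<bar> ^ p) \<partial>pulse_hist (Suc m) mb' (Suc n))"
    by (simp add: gp_moment_def)
  also have "\<dots> = (\<integral>\<^sup>+ h. ennreal (?H ^ p) * ennreal (\<bar>h (Suc 0) 0\<bar> ^ p)
      \<partial>pulse_hist (Suc m) mb' (Suc n))"
  proof (rule nn_integral_cong_AE)
    show "AE h in pulse_hist (Suc m) mb' (Suc n).
        ennreal (\<bar>h (Suc n) 0\<bar> ^ p) = ennreal (?H ^ p) * ennreal (\<bar>h (Suc 0) 0\<bar> ^ p)"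
      using AE_scaled_pulse_sums[OF mb', of n]
    proof eventually_elim
      fix h assume "scaled_pulse_sums (Suc m) (Suc n) h"
      then have "h (Suc n) 0 = ?H * h (Suc 0) 0" by (rule scaled_pulse_sumsD) simp
      moreover have "?H \<ge> 0" by (simp add: pulse_sum_def sum_nonneg pulse_nonneg)
      ultimately show "ennreal (\<bar>h (Suc n) 0\<bar> ^ p) = ennreal (?H ^ p) * ennreal (\<bar>h (Suc 0) 0\<bar> ^ p)"
        by (simp add: abs_mult power_mult_distrib ennreal_mult)
    qed
  qed
  also have "\<dots> = ennreal (?H ^ p) * (\<integral>\<^sup>+ y. ennreal (\<bar>y\<bar> ^ p) \<partial>normal1 0 1)"
  proof -
    have "(\<lambda>h. ennreal (\<bar>h (Suc 0) 0\<bar> ^ p)) \<in> borel_measurable (pulse_hist (Suc m) mb' (Suc n))"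
      by (subst measurable_cong_sets[OF sets_pulse_hist refl])
        (rule measurable_compose[OF measurable_hist_component g], simp_all)
    then show ?thesis
      by (simp only: nn_integral_cmult nn_integral_pulse_hist_first_state[OF g])
  qed
  finally show ?thesis .
qed

lemma SUP_pulse_moment_long:
  assumes mb': "enat m < mb'" and p: "1 \<le> p"
  shows "(SUP t. pulse_moment (Suc m) mb' p t) = \<infinity>"
proof -
  let ?M = "\<integral>\<^sup>+ y. ennreal (\<bar>y\<bar> ^ p) \<partial>normal1 0 1"
  have unbounded: "(SUP n. ?M * ennreal (pulse_sum (Suc m) (Suc n) ^ p)) = \<infinity>"
  proof (rule SUP_mult_ennreal_unbounded)
    show "0 < ?M" by (rule nn_integral_abs_power_normal1_pos) simp
    fix B
    obtain n where H: "max B 1 \<le> pulse_sum (Suc m) (Suc n)"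
      using pulse_sum_unbounded[of "Suc m" "max B 1"] by blast
    then have "pulse_sum (Suc m) (Suc n) ^ 1 \<le> pulse_sum (Suc m) (Suc n) ^ p"
      using p by (intro power_increasing) auto
    then have "B \<le> pulse_sum (Suc m) (Suc n) ^ p" using H by simp
    then show "\<exists>n. B \<le> pulse_sum (Suc m) (Suc n) ^ p" ..
  qed
  have "(SUP n. ?M * ennreal (pulse_sum (Suc m) (Suc n) ^ p)) \<le> (SUP t. pulse_moment (Suc m) mb' p t)"
  proof (rule SUP_mono)
    fix n
    show "\<exists>t\<in>UNIV. ?M * ennreal (pulse_sum (Suc m) (Suc n) ^ p) \<le> pulse_moment (Suc m) mb' p t"
      by (rule bexI[of _ "Suc n"]) (simp_all add: pulse_moment_long[OF mb'] mult.commute)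
  qed
  then show ?thesis using unbounded by (simp add: top_unique del: SUP_eq_top_iff)
qed

theorem theorem2:
  fixes mb mb' :: enat and p :: nat
  assumes "mb < mb'" and "1 \<le> p"
  shows "\<exists>nx nu X Y sn k mf u x0.
     X \<in> carrier_mat (nx + nu) (dim_col X) \<and> Y \<in> carrier_mat (dim_col X) nx \<and>
     sn > 0 \<and> sym_kernel_on (nx + nu) k \<and> psd_kernel_on (nx + nu) k \<and>
     continuous_mean_on (nx + nu) mf \<and>
     gp_wellposed nx nu X Y sn k mf mb u \<and> gp_wellposed nx nu X Y sn k mf mb' u \<and>
     (SUP t. gp_moment nx nu X Y sn k mf mb u x0 p t) < \<infinity> \<and>
     (SUP t. gp_moment nx nu X Y sn k mf mb' u x0 p t) = \<infinity>"
proof -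
  obtain m where mb: "mb = enat m" using assms(1) by (cases mb) auto
  show ?thesis
  proof (intro exI conjI)
    show "no_train_inputs \<in> carrier_mat (Suc 0 + Suc 0) (dim_col no_train_inputs)"
      and "no_train_outputs \<in> carrier_mat (dim_col no_train_inputs) (Suc 0)"
      by (simp_all add: no_train_inputs_def no_train_outputs_def numeral_2_eq_2)
    show "(1::real) > 0" by simp
    show "sym_kernel_on (Suc 0 + Suc 0) (pulse_kernel (Suc m))"
      and "psd_kernel_on (Suc 0 + Suc 0) (pulse_kernel (Suc m))"
      by (rule sym_kernel_on_pulse_kernel psd_kernel_on_pulse_kernel)+
    show "continuous_mean_on (Suc 0 + Suc 0) state_mean"
      by (rule continuous_mean_on_state_mean) simp
    show "gp_wellposed (Suc 0) (Suc 0) no_train_inputs no_train_outputs 1 (pulse_kernel (Suc m))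
        state_mean mb time_input"
      and "gp_wellposed (Suc 0) (Suc 0) no_train_inputs no_train_outputs 1 (pulse_kernel (Suc m))
        state_mean mb' time_input"
      by (rule gp_wellposed_pulse)+
    show "(SUP t. pulse_moment (Suc m) mb p t) < \<infinity>"
      unfolding mb by (rule SUP_pulse_moment_short)
    show "(SUP t. pulse_moment (Suc m) mb' p t) = \<infinity>"
      using assms mb by (intro SUP_pulse_moment_long) simp_all
  qed
qed

end
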